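(* Let $D=pq$ with $p\neq q$ odd primes, let $r$ be a positive integer with $2rD$ square-free, and let $d$ be a (possibly negative) integer with $d\mid rD$. Let $C'_d$ be the curve $W^2=d-\frac{2rD}{d}Z^4$. Then: (1) $C'_d(\mathbb{Q}_2)\neq\emptyset$ if and only if $d-2rD/d\equiv1\pmod 8$ or $d\equiv1\pmod 8$; (2) for any prime $t\mid\frac{rD}{d}$, $C'_d(\mathbb{Q}_t)\neq\emptyset$ if and only if $\left(\frac{d}{t}\right)=1$; (3) for any prime $l\mid d$, $C'_d(\mathbb{Q}_l)\neq\emptyset$ if and only if $\left(\frac{-2rD/d}{l}\right)=1$.
   Context: $\left(\frac{\cdot}{\cdot}\right)$ denotes the Legendre symbol; $C'_d(\mathbb{Q}_v)$ denotes the set of $\mathbb{Q}_v$-points $(Z,W)$ of the affine curve. *)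

theory Defs
  imports "HOL-Number_Theory.Number_Theory" "HOL-Computational_Algebra.Squarefree"
begin

text \<open>p-adic integers Z_v are modelled as the inverse limit of the rings Z/v^n Z:
  a sequence x :: nat => int with x (n+1) congruent to x n modulo v^n.
  An identity between integer polynomial expressions in such elements holds in Z_v
  iff it holds modulo v^n at level n for every n.\<close>

definition padic_seq :: "int \<Rightarrow> (nat \<Rightarrow> int) \<Rightarrow> bool" where
  "padic_seq v x \<longleftrightarrow> (\<forall>n. [x (Suc n) = x n] (mod v ^ n))"

text \<open>Q_v-points (Z,W) of the affine curve W^2 = A + B Z^4.  Every element of Q_v
  has the form u / v^k with u in Z_v; writing W = w / v^a and Z = z / v^b and clearing
  denominators (Z_v is a domain) the equation W^2 = A + B Z^4 becomes
  v^(4b) w^2 = v^(2a) (A v^(4b) + B z^4) in Z_v.\<close>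

definition has_Qv_point :: "int \<Rightarrow> int \<Rightarrow> int \<Rightarrow> bool" where
  "has_Qv_point v A B \<longleftrightarrow>
     (\<exists>(a::nat) (b::nat) w z. padic_seq v w \<and> padic_seq v z \<and>
        (\<forall>n. [v ^ (4*b) * (w n)^2 = v ^ (2*a) * (A * v ^ (4*b) + B * (z n)^4)] (mod v ^ n)))"

end

theory Submission
  imports Defs
begin

text \<open>Put f = rD/d, so the curve is W^2 = d - 2f Z^4 with 2df squarefree. A Q_v-point with
  denominators cleared shows that d v^(4e) - 2f Z^4, where e = 0 or Z is a v-adic unit, is an even
  power of v times a square unit. Squarefreeness forces its valuation to be 0 or 1; valuation 1 is
  thus impossible, and valuation 0 fixes a square class modulo v (modulo 8 when v = 2) that can be
  read off: d when v divides f, -2f when v divides d, and d or d - 2f, depending on the parity of Z,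
  when v = 2. Conversely, Hensel's lemma lifts a square root of d - 2f Z^4 at Z = 0 or Z = 1.\<close>

lemma padic_seq_exists:
  fixes v :: int
  assumes P0: "P 0 y0"
    and step: "\<And>n y. P n y \<Longrightarrow> \<exists>y'. P (Suc n) y' \<and> [y' = y] (mod v ^ n)"
  shows "\<exists>x. padic_seq v x \<and> (\<forall>n. P n (x n))"
proof -
  define x where "x = rec_nat y0 (\<lambda>n y. SOME y'. P (Suc n) y' \<and> [y' = y] (mod v ^ n))"
  have x0: "x 0 = y0"
    and xSuc: "\<And>n. x (Suc n) = (SOME y'. P (Suc n) y' \<and> [y' = x n] (mod v ^ n))"
    by (simp_all add: x_def)
  have "P n (x n) \<and> P (Suc n) (x (Suc n)) \<and> [x (Suc n) = x n] (mod v ^ n)" for n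
  proof (induction n)
    case 0
    show ?case using P0 x0 someI_ex[OF step[OF P0]] xSuc[of 0] by simp
  next
    case (Suc n)
    then show ?case using someI_ex[OF step[of "Suc n"]] xSuc[of "Suc n"] by simp
  qed
  then show ?thesis unfolding padic_seq_def by blast
qed

lemma square_root_lift_odd_prime:
  fixes t c y :: int
  assumes t: "prime t" "odd t" and c: "\<not> t dvd c" and y: "[y^2 = c] (mod t ^ Suc n)"
  shows "\<exists>y'. [y'^2 = c] (mod t ^ Suc (Suc n)) \<and> [y' = y] (mod t ^ Suc n)"
proof -
  have "[y^2 = c] (mod t)"
    using y cong_dvd_modulus dvd_power[of "Suc n" t] by blast
  then have "\<not> t dvd y"
    using c t by (metis cong_dvd_iff dvd_mult power2_eq_square)
  moreover have "\<not> t dvd 2"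
    using t by (metis prime_ge_2_int zdvd_imp_le zero_less_numeral order.antisym)
  ultimately have "coprime (2 * y) t"
    using t by (metis prime_dvd_mult_iff prime_imp_coprime coprime_commute)
  then obtain i where i: "[2 * y * i = 1] (mod t)"
    using cong_solve_coprime_int by blast
  obtain g where g: "c - y^2 = t ^ Suc n * g"
    using y by (metis cong_iff_dvd_diff cong_sym dvdE)
  define s where "s = i * g"
  have "[2 * y * s = g] (mod t)"
    using cong_scalar_right[OF i, of g] by (simp add: s_def ac_simps)
  then obtain h where h: "2 * y * s - g = t * h"
    by (metis cong_iff_dvd_diff dvdE)
  \<comment> \<open>Newton step: the correction term 2 y s t^(n+1) cancels the error c - y^2 modulo t^(n+2).\<close>
  define y' where "y' = y + s * t ^ Suc n"
  have "y'^2 - c = t ^ Suc (Suc n) * (h + s^2 * t ^ n)"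
  proof -
    have "y'^2 - c = (2 * y * s - g) * t ^ Suc n + s^2 * (t ^ Suc n)^2"
      unfolding y'_def using g by (simp add: power2_eq_square algebra_simps)
    also have "\<dots> = t ^ Suc (Suc n) * (h + s^2 * t ^ n)"
      unfolding h by (simp add: power2_eq_square algebra_simps)
    finally show ?thesis .
  qed
  then have "[y'^2 = c] (mod t ^ Suc (Suc n))"
    by (simp add: cong_iff_dvd_diff)
  moreover have "[y' = y] (mod t ^ Suc n)"
    by (simp add: y'_def cong_iff_dvd_diff)
  ultimately show ?thesis by blast
qed

lemma square_root_lift_two:
  fixes c y :: int
  assumes y: "odd y" "[y^2 = c] (mod 2 ^ (n + 3))"
  shows "\<exists>y'. odd y' \<and> [y'^2 = c] (mod 2 ^ (n + 4)) \<and> [y' = y] (mod 2 ^ n)"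
proof -
  define M :: int where "M = 2 ^ n"
  have pow: "2 ^ (n + 3) = 8 * M" "2 ^ (n + 4) = 16 * M"
    by (simp_all add: M_def power_add)
  have "8 * M dvd c - y^2"
    using y(2) unfolding pow(1) by (simp add: cong_iff_dvd_diff[symmetric] cong_sym_eq)
  then obtain g where g: "c - y^2 = 8 * M * g" ..
  show ?thesis
  proof (cases "even g")
    case True
    then obtain g' where "g = 2 * g'" by (rule evenE)
    then have "c - y^2 = 16 * M * g'"
      using g by simp
    then have "[c = y^2] (mod 2 ^ (n + 4))"
      unfolding pow(2) cong_iff_dvd_diff by simp
    then have "[y^2 = c] (mod 2 ^ (n + 4))"
      by (rule cong_sym)
    then show ?thesis
      using y(1) cong_refl by blast
  next
    case False
    \<comment> \<open>Adding 2^(n+2) changes y^2 by 2^(n+3) y modulo 2^(n+4), and y is odd.\<close>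
    define y' where "y' = y + 4 * M"
    have "even (y - g)"
      using False y(1) by simp
    then obtain k where k: "y - g = 2 * k" by (rule evenE)
    have "y'^2 - c = 8 * M * (y - g) + 16 * M * M"
      unfolding y'_def using g by (simp add: power2_eq_square algebra_simps)
    also have "\<dots> = 16 * M * (k + M)"
      unfolding k by (simp add: algebra_simps)
    finally have "[y'^2 = c] (mod 2 ^ (n + 4))"
      unfolding pow(2) by (simp add: cong_iff_dvd_diff)
    moreover have "[y' = y] (mod 2 ^ n)"
      by (simp add: y'_def M_def cong_iff_dvd_diff)
    moreover have "odd y'" using y(1) by (simp add: y'_def)
    ultimately show ?thesis by blast
  qed
qed

lemma padic_sqrt_odd_prime:
  fixes t c :: int
  assumes t: "prime t" "odd t" and c: "\<not> t dvd c" "QuadRes t c"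
  shows "\<exists>w. padic_seq t w \<and> (\<forall>n. [w n ^ 2 = c] (mod t ^ n))"
proof -
  obtain y0 where "[y0^2 = c] (mod t ^ Suc 0)"
    using c(2) by (auto simp: QuadRes_def)
  moreover have "\<exists>y'. [y'^2 = c] (mod t ^ Suc (Suc n)) \<and> [y' = y] (mod t ^ n)"
    if "[y^2 = c] (mod t ^ Suc n)" for n y
  proof -
    have "t ^ n dvd t ^ Suc n" by simp
    then show ?thesis
      using square_root_lift_odd_prime[OF t c(1) that] cong_dvd_modulus by blast
  qed
  ultimately obtain w where w: "padic_seq t w" "\<forall>n. [w n ^ 2 = c] (mod t ^ Suc n)"
    using padic_seq_exists[of "\<lambda>n y. [y^2 = c] (mod t ^ Suc n)" y0 t] by blast
  moreover have "[w n ^ 2 = c] (mod t ^ n)" for n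
    using w(2) by (meson cong_dvd_modulus le_SucI order.refl le_imp_power_dvd)
  ultimately show ?thesis by blast
qed

lemma padic_sqrt_two:
  fixes c :: int
  assumes "[c = 1] (mod 8)"
  shows "\<exists>w. padic_seq 2 w \<and> (\<forall>n. [w n ^ 2 = c] (mod 2 ^ n))"
proof -
  have "odd (1::int) \<and> [1^2 = c] (mod 2 ^ (0 + 3))"
    using assms by (simp add: cong_sym)
  moreover have "\<exists>y'. (odd y' \<and> [y'^2 = c] (mod 2 ^ (Suc n + 3))) \<and> [y' = y] (mod 2 ^ n)"
    if "odd y \<and> [y^2 = c] (mod 2 ^ (n + 3))" for n y
  proof -
    have "Suc n + 3 = n + 4" by simp
    then show ?thesis
      using square_root_lift_two[of y c n] that by presburger
  qed
  ultimately obtain w where w: "padic_seq 2 w" "\<forall>n. odd (w n) \<and> [w n ^ 2 = c] (mod 2 ^ (n + 3))"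
    using padic_seq_exists[of "\<lambda>n y. odd y \<and> [y^2 = c] (mod 2 ^ (n + 3))" 1 2] by blast
  moreover have "[w n ^ 2 = c] (mod 2 ^ n)" for n
    using w(2) by (meson cong_dvd_modulus le_add1 le_imp_power_dvd)
  ultimately show ?thesis by blast
qed

lemma has_Qv_pointI:
  assumes "padic_seq v w" and "\<And>n. [w n ^ 2 = A + B * Z ^ 4] (mod v ^ n)"
  shows "has_Qv_point v A B"
proof -
  have "padic_seq v (\<lambda>_. Z)" by (simp add: padic_seq_def)
  then show ?thesis
    unfolding has_Qv_point_def using assms
    by (intro exI[of _ 0] exI[of _ 0] exI[of _ w] exI[of _ "\<lambda>_. Z"]) simp
qed

lemma has_Qv_point_odd_primeI:
  fixes t A B Z :: int
  assumes "prime t" "odd t" "\<not> t dvd A + B * Z ^ 4" "QuadRes t (A + B * Z ^ 4)"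
  shows "has_Qv_point t A B"
  using padic_sqrt_odd_prime[OF assms] has_Qv_pointI by blast

lemma has_Qv_point_twoI:
  fixes A B Z :: int
  assumes "[A + B * Z ^ 4 = 1] (mod 8)"
  shows "has_Qv_point 2 A B"
  using padic_sqrt_two[OF assms] has_Qv_pointI by blast

lemma prime_power_dvd_cong:
  fixes p x y :: int
  assumes "[x = y] (mod p ^ N)" "n < N" "p ^ n dvd y" "\<not> p ^ Suc n dvd y"
  shows "p ^ n dvd x" "\<not> p ^ Suc n dvd x"
proof -
  have "p ^ n dvd p ^ N" "p ^ Suc n dvd p ^ N"
    using assms(2) le_imp_power_dvd Suc_leI less_imp_le by blast+
  then have "p ^ n dvd x - y" "p ^ Suc n dvd x - y"
    using assms(1) by (meson cong_iff_dvd_diff dvd_trans)+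
  then show "p ^ n dvd x"
    using assms(3) dvd_add[of "p ^ n" "x - y" y] by simp
  show "\<not> p ^ Suc n dvd x"
    using \<open>p ^ Suc n dvd x - y\<close> assms(4) dvd_diff[of "p ^ Suc n" x "x - y"] by auto
qed

lemma cong_mult_prime_power_cancel:
  fixes t x y :: int
  assumes "t \<noteq> 0" "m \<le> N" "[t ^ m * x = t ^ m * y] (mod t ^ N)"
  shows "[x = y] (mod t ^ (N - m))"
proof -
  have "t ^ m * t ^ (N - m) dvd t ^ m * (x - y)"
    using assms(2,3) by (simp add: cong_iff_dvd_diff right_diff_distrib power_add[symmetric])
  then show ?thesis
    using assms(1) by (simp add: cong_iff_dvd_diff)
qed

lemma prime_power_square_cong_unit:
  fixes t u W :: int
  assumes t: "prime t" and u: "\<not> t dvd u" and m: "m < N"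
    and cong: "[t ^ (2 * j) * W^2 = t ^ m * u] (mod t ^ N)"
  shows "even m \<and> (\<exists>W'. [W'^2 = u] (mod t ^ (N - m)))"
proof -
  have t0: "t \<noteq> 0" "\<not> is_unit t" using t by auto
  have "t ^ m dvd t ^ m * u" "\<not> t ^ Suc m dvd t ^ m * u"
    using u t0 by simp_all
  from prime_power_dvd_cong[OF cong m this]
  have "multiplicity t (t ^ (2 * j) * W^2) = m" "W \<noteq> 0"
    using multiplicity_eqI by auto
  obtain W' where W': "W = t ^ multiplicity t W * W'" "\<not> t dvd W'"
    using multiplicity_decompose' \<open>W \<noteq> 0\<close> t0(2) by blast
  define k where "k = multiplicity t W"
  have X: "t ^ (2 * j) * W^2 = t ^ (2 * j + 2 * k) * W'^2"
    by (subst W'(1)) (simp add: k_def power_mult_distrib power_add power_mult[symmetric] mult_ac)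
  have "\<not> t dvd W'^2"
    using W'(2) t by (simp add: prime_dvd_power_iff)
  then have "multiplicity t (t ^ (2 * j) * W^2) = 2 * j + 2 * k"
    unfolding X using multiplicity_decomposeI[OF refl _ t0(1)] by blast
  then have mk: "m = 2 * (j + k)"
    using \<open>multiplicity t _ = m\<close> by simp
  have "[W'^2 = u] (mod t ^ (N - m))"
    using cong_mult_prime_power_cancel[OF t0(1) less_imp_le[OF m]] cong X mk
    by (simp add: algebra_simps)
  then show ?thesis
    using mk by auto
qed

lemma prime_power_factor_bounded:
  fixes t z :: int
  assumes "prime t"
  obtains k z' where "k \<le> b" "z = t ^ k * z'" "k = b \<or> \<not> t dvd z'"
proof (cases "t ^ b dvd z")
  case True
  then obtain z' where "z = t ^ b * z'" ..
  then show ?thesis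
    using that by blast
next
  case False
  then have "z \<noteq> 0" "multiplicity t z < b"
    using multiplicity_dvd'[of b t z] by (auto simp: not_le[symmetric])
  moreover obtain z' where "z = t ^ multiplicity t z * z'" "\<not> t dvd z'"
    using multiplicity_decompose'[of z t] \<open>z \<noteq> 0\<close> assms not_prime_unit by blast
  ultimately show ?thesis
    using that less_imp_le by blast
qed

lemma quartic_form_factor_prime_power:
  fixes v A B Z :: int
  assumes "k \<le> b"
  shows "A * v ^ (4 * b) + B * (v ^ k * Z) ^ 4 = v ^ (4 * k) * (A * v ^ (4 * (b - k)) + B * Z ^ 4)"
proof -
  have "4 * b = 4 * k + 4 * (b - k)"
    using assms by simp
  then have "v ^ (4 * b) = v ^ (4 * k) * v ^ (4 * (b - k))"
    by (metis power_add)
  moreover have "(v ^ k * Z) ^ 4 = v ^ (4 * k) * Z ^ 4"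
    by (simp add: power_mult_distrib ac_simps flip: power_mult)
  ultimately show ?thesis
    by (simp add: algebra_simps)
qed

text \<open>The point's Z-coordinate is Z/v^e with Z a unit, or e = 0 and Z integral.\<close>
lemma has_Qv_point_normal_form:
  fixes v A B :: int
  assumes v: "prime v" and point: "has_Qv_point v A B"
  obtains e Z where "e = 0 \<or> \<not> v dvd Z"
    and "\<And>i x. i < K \<Longrightarrow> A * v ^ (4 * e) + B * Z ^ 4 = v ^ i * x \<Longrightarrow> \<not> v dvd x \<Longrightarrow>
           even i \<and> (\<exists>y. [y^2 = x] (mod v ^ K))"
proof -
  obtain a b w z where
    cong: "\<And>n. [v ^ (4 * b) * (w n)^2 = v ^ (2 * a) * (A * v ^ (4 * b) + B * (z n)^4)] (mod v ^ n)"
    using point unfolding has_Qv_point_def by blast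
  define N where "N = 2 * a + 4 * b + 2 * K"
  obtain k Z where k: "k \<le> b" "z N = v ^ k * Z" "k = b \<or> \<not> v dvd Z"
    using prime_power_factor_bounded[OF v] .
  show ?thesis
  proof (rule that[of "b - k" Z])
    show "b - k = 0 \<or> \<not> v dvd Z"
      using k(3) by auto
  next
    fix i x
    assume u: "A * v ^ (4 * (b - k)) + B * Z ^ 4 = v ^ i * x" and i: "i < K" and x: "\<not> v dvd x"
    have "v ^ (2 * a) * (A * v ^ (4 * b) + B * (z N)^4) = v ^ (2 * a + 4 * k + i) * x"
      unfolding k(2) quartic_form_factor_prime_power[OF k(1)] u by (simp add: power_add mult_ac)
    then have "[v ^ (2 * (2 * b)) * (w N)^2 = v ^ (2 * a + 4 * k + i) * x] (mod v ^ N)"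
      using cong[of N] by (simp add: mult.assoc)
    moreover have "2 * a + 4 * k + i < N"
      using k(1) i by (simp add: N_def)
    ultimately obtain y where ev: "even (2 * a + 4 * k + i)"
      and y: "[y^2 = x] (mod v ^ (N - (2 * a + 4 * k + i)))"
      using prime_power_square_cong_unit[OF v x] by blast
    have "v ^ K dvd v ^ (N - (2 * a + 4 * k + i))"
      using k(1) i by (simp add: N_def le_imp_power_dvd)
    then have "[y^2 = x] (mod v ^ K)"
      by (rule cong_dvd_modulus[OF y])
    then show "even i \<and> (\<exists>y. [y^2 = x] (mod v ^ K))"
      using ev by auto
  qed
qed

lemma odd_square_cong_1_mod_8:
  fixes y :: int
  assumes "odd y"
  shows "[y^2 = 1] (mod 8)"
proof -
  have "y mod 8 = 1 \<or> y mod 8 = 3 \<or> y mod 8 = 5 \<or> y mod 8 = 7"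
    using assms by presburger
  then show ?thesis
    unfolding cong_def by (auto simp: power_mod[of y 8 2, symmetric])
qed

lemma QuadRes_of_cong_times_fourth_power:
  fixes l W Z c :: int
  assumes l: "prime l" and Z: "\<not> l dvd Z" and cong: "[W^2 = c * Z^4] (mod l)"
  shows "QuadRes l c"
proof -
  have "\<not> l dvd Z^2"
    using l Z by (simp add: prime_dvd_power_iff)
  then have "coprime (Z^2) l"
    using l prime_imp_coprime coprime_commute by blast
  then obtain i where i: "[Z^2 * i = 1] (mod l)"
    using cong_solve_coprime_int by blast
  have "[(W * i)^2 = c * (Z^2 * i)^2] (mod l)"
    using cong_mult[OF cong cong_refl[of "i^2"]]
    by (simp add: power_mult_distrib flip: power_mult) (simp add: mult_ac)
  also have "[c * (Z^2 * i)^2 = c] (mod l)"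
    using cong_mult[OF cong_refl[of c] cong_pow[OF i, of 2]] by simp
  finally show ?thesis
    unfolding QuadRes_def by blast
qed

lemma Legendre_eq_1_iff: "Legendre a p = 1 \<longleftrightarrow> \<not> p dvd a \<and> QuadRes p a"
  by (simp add: Legendre_def cong_0_iff)

lemma has_Qv_point_prime_dvd_quartic_coeff_iff:
  fixes t A B B' :: int
  assumes t: "prime t" "odd t" and A: "\<not> t dvd A" and B: "B = t * B'" "\<not> t dvd B'"
  shows "has_Qv_point t A B \<longleftrightarrow> Legendre A t = 1"
proof
  assume "has_Qv_point t A B"
  then obtain e Z where eZ: "e = 0 \<or> \<not> t dvd Z"
    and sq: "\<And>i x. i < 2 \<Longrightarrow> A * t ^ (4 * e) + B * Z ^ 4 = t ^ i * x \<Longrightarrow> \<not> t dvd x \<Longrightarrow>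
               even i \<and> (\<exists>y. [y^2 = x] (mod t ^ 2))"
    by (rule has_Qv_point_normal_form[OF t(1), where K = 2]) blast
  have "e = 0"
  proof (rule ccontr)
    assume "e \<noteq> 0"
    then have "A * t ^ (4 * e) + B * Z ^ 4 = t ^ 1 * (A * t ^ (4 * e - 1) + B' * Z ^ 4)"
      by (simp add: B algebra_simps flip: power_Suc)
    moreover have "\<not> t dvd A * t ^ (4 * e - 1) + B' * Z ^ 4"
      using \<open>e \<noteq> 0\<close> eZ t B(2) by (simp add: dvd_add_right_iff prime_dvd_mult_iff prime_dvd_power_iff)
    ultimately show False
      using sq[of 1] by fastforce
  qed
  have "\<not> t dvd A + B * Z ^ 4"
    using A by (simp add: B dvd_add_left_iff)
  then obtain y where "[y^2 = A + B * Z ^ 4] (mod t ^ 2)"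
    using sq[of 0] \<open>e = 0\<close> by auto
  then have "[y^2 = A + B * Z ^ 4] (mod t)"
    by (rule cong_dvd_modulus) simp
  also have "[A + B * Z ^ 4 = A] (mod t)"
    by (simp add: B cong_iff_dvd_diff)
  finally have "[y^2 = A] (mod t)" .
  then show "Legendre A t = 1"
    using A by (auto simp: Legendre_eq_1_iff QuadRes_def)
next
  assume "Legendre A t = 1"
  then show "has_Qv_point t A B"
    using has_Qv_point_odd_primeI[OF t, of A B 0] by (simp add: Legendre_eq_1_iff)
qed

lemma has_Qv_point_prime_dvd_const_coeff_iff:
  fixes l A A' B :: int
  assumes l: "prime l" "odd l" and A: "A = l * A'" "\<not> l dvd A'" and B: "\<not> l dvd B"
  shows "has_Qv_point l A B \<longleftrightarrow> Legendre B l = 1"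
proof
  assume "has_Qv_point l A B"
  then obtain e Z where eZ: "e = 0 \<or> \<not> l dvd Z"
    and sq: "\<And>i x. i < 2 \<Longrightarrow> A * l ^ (4 * e) + B * Z ^ 4 = l ^ i * x \<Longrightarrow> \<not> l dvd x \<Longrightarrow>
               even i \<and> (\<exists>y. [y^2 = x] (mod l ^ 2))"
    by (rule has_Qv_point_normal_form[OF l(1), where K = 2]) blast
  have "\<not> l dvd Z"
  proof
    assume "l dvd Z"
    then obtain Z' where Z': "Z = l * Z'" ..
    have "A * l ^ (4 * e) + B * Z ^ 4 = l ^ 1 * (A' + B * l ^ 3 * Z' ^ 4)"
      using eZ \<open>l dvd Z\<close> by (simp add: A Z' algebra_simps numeral_eq_Suc)
    moreover have "\<not> l dvd A' + B * l ^ 3 * Z' ^ 4"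
      using A(2) by (simp add: dvd_add_left_iff)
    ultimately show False
      using sq[of 1] by fastforce
  qed
  then have unit: "\<not> l dvd A * l ^ (4 * e) + B * Z ^ 4"
    using l(1) B by (simp add: A dvd_add_right_iff prime_dvd_mult_iff prime_dvd_power_iff)
  then obtain y where "[y^2 = A * l ^ (4 * e) + B * Z ^ 4] (mod l ^ 2)"
    using sq[of 0] by auto
  then have "[y^2 = A * l ^ (4 * e) + B * Z ^ 4] (mod l)"
    by (rule cong_dvd_modulus) simp
  also have "[A * l ^ (4 * e) + B * Z ^ 4 = B * Z ^ 4] (mod l)"
    by (simp add: A cong_iff_dvd_diff)
  finally have "[y^2 = B * Z ^ 4] (mod l)" .
  then show "Legendre B l = 1"
    using QuadRes_of_cong_times_fourth_power[OF l(1) \<open>\<not> l dvd Z\<close>] B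
    by (simp add: Legendre_eq_1_iff)
next
  assume "Legendre B l = 1"
  then obtain y where y: "[y^2 = B] (mod l)"
    by (auto simp: Legendre_eq_1_iff QuadRes_def)
  have "[B = A + B * 1 ^ 4] (mod l)"
    by (simp add: A cong_iff_dvd_diff)
  then have "QuadRes l (A + B * 1 ^ 4)"
    using y cong_trans unfolding QuadRes_def by blast
  moreover have "\<not> l dvd A + B * 1 ^ 4"
    using B by (simp add: A dvd_add_right_iff)
  ultimately show "has_Qv_point l A B"
    by (rule has_Qv_point_odd_primeI[OF l, rotated])
qed

lemma has_Qv_point_two_iff:
  fixes A B B' :: int
  assumes A: "odd A" and B: "B = 2 * B'" "odd B'"
  shows "has_Qv_point 2 A B \<longleftrightarrow> [A + B = 1] (mod 8) \<or> [A = 1] (mod 8)"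
proof
  assume "has_Qv_point 2 A B"
  then obtain e Z where eZ: "e = 0 \<or> odd Z"
    and sq: "\<And>i x. i < 3 \<Longrightarrow> A * 2 ^ (4 * e) + B * Z ^ 4 = 2 ^ i * x \<Longrightarrow> odd x \<Longrightarrow>
               even i \<and> (\<exists>y. [y^2 = x] (mod 2 ^ 3))"
    by (rule has_Qv_point_normal_form[OF two_is_prime, where K = 3]) blast
  have "e = 0"
  proof (rule ccontr)
    assume "e \<noteq> 0"
    then have "A * 2 ^ (4 * e) + B * Z ^ 4 = 2 ^ 1 * (A * 2 ^ (4 * e - 1) + B' * Z ^ 4)"
      by (simp add: B algebra_simps flip: power_Suc)
    moreover have "odd (A * 2 ^ (4 * e - 1) + B' * Z ^ 4)"
      using \<open>e \<noteq> 0\<close> eZ B(2) by simp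
    ultimately show False
      using sq[of 1] by fastforce
  qed
  have "odd (A + B * Z ^ 4)"
    using A by (simp add: B)
  moreover obtain y where y: "[y^2 = A + B * Z ^ 4] (mod 8)"
    using sq[of 0] \<open>e = 0\<close> calculation by auto
  ultimately have "odd y"
    using cong_dvd_iff[OF cong_dvd_modulus[OF y, of 2]] by auto
  then have "[A + B * Z ^ 4 = 1] (mod 8)"
    using y odd_square_cong_1_mod_8 by (metis cong_sym cong_trans)
  moreover have "[A + B * Z ^ 4 = A + B] (mod 8) \<or> [A + B * Z ^ 4 = A] (mod 8)"
  proof (cases "even Z")
    case True
    then obtain z where "Z = 2 * z" by (rule evenE)
    then have "A + B * Z ^ 4 = A + 8 * (4 * B' * z ^ 4)"
      by (simp add: B power_mult_distrib)
    then show ?thesis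
      by (simp add: cong_iff_dvd_diff)
  next
    case False
    then have "[(Z^2)^2 = 1] (mod 8)"
      by (intro odd_square_cong_1_mod_8) simp
    then have "8 dvd Z ^ 4 - 1"
      by (simp add: cong_iff_dvd_diff flip: power_mult)
    then have "8 dvd B * (Z ^ 4 - 1)"
      by simp
    then have "[A + B * Z ^ 4 = A + B] (mod 8)"
      by (simp add: cong_iff_dvd_diff right_diff_distrib)
    then show ?thesis ..
  qed
  ultimately show "[A + B = 1] (mod 8) \<or> [A = 1] (mod 8)"
    by (meson cong_sym cong_trans)
next
  assume "[A + B = 1] (mod 8) \<or> [A = 1] (mod 8)"
  then show "has_Qv_point 2 A B"
    using has_Qv_point_twoI[of A B 1] has_Qv_point_twoI[of A B 0] by auto
qed

lemma squarefree_mult_prime_dvd_left: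
  fixes a b p :: int
  assumes "squarefree (a * b)" "prime p" "p dvd a"
  shows "\<not> p dvd b"
proof
  assume "p dvd b"
  then have "p^2 dvd a * b"
    using assms(3) by (simp add: power2_eq_square mult_dvd_mono)
  then show False
    using assms(1,2) squarefreeD not_prime_unit by blast
qed

lemma curve_point_two_iff:
  fixes d f :: int
  assumes sq: "squarefree (2 * (d * f))"
  shows "has_Qv_point 2 d (- (2 * f)) \<longleftrightarrow> [d - 2 * f = 1] (mod 8) \<or> [d = 1] (mod 8)"
proof -
  have "odd (d * f)"
    using squarefree_mult_prime_dvd_left[OF sq, of 2] by simp
  then show ?thesis
    using has_Qv_point_two_iff[of d "- (2 * f)" "- f"] by simp
qed

lemma curve_point_prime_dvd_quotient_iff:
  fixes d f t :: int
  assumes sq: "squarefree (2 * (d * f))" and t: "prime t" "t dvd f"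
  shows "has_Qv_point t d (- (2 * f)) \<longleftrightarrow> Legendre d t = 1"
proof -
  obtain f' where f': "f = t * f'"
    using t(2) ..
  have "odd (d * f)"
    using squarefree_mult_prime_dvd_left[OF sq, of 2] by simp
  then have "odd t"
    using t(2) by (meson dvd_mult dvd_trans)
  moreover have "\<not> t dvd 2 * d * f'"
    using squarefree_mult_prime_dvd_left[of t "2 * d * f'"] sq t(1) by (simp add: f' mult_ac)
  ultimately show ?thesis
    using has_Qv_point_prime_dvd_quartic_coeff_iff[OF t(1) _ _ _, of d "- (2 * f)" "- (2 * f')"]
    by (simp add: f' prime_dvd_mult_iff t(1))
qed

lemma curve_point_prime_dvd_d_iff:
  fixes d f l :: int
  assumes sq: "squarefree (2 * (d * f))" and l: "prime l" "l dvd d"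
  shows "has_Qv_point l d (- (2 * f)) \<longleftrightarrow> Legendre (- (2 * f)) l = 1"
proof -
  obtain d' where d': "d = l * d'"
    using l(2) ..
  have "odd (d * f)"
    using squarefree_mult_prime_dvd_left[OF sq, of 2] by simp
  then have "odd l"
    using l(2) by (meson dvd_mult2 dvd_trans)
  moreover have "\<not> l dvd d' * (2 * f)"
    using squarefree_mult_prime_dvd_left[of l "d' * (2 * f)"] sq l(1) by (simp add: d' mult_ac)
  ultimately show ?thesis
    using has_Qv_point_prime_dvd_const_coeff_iff[OF l(1) _ d'] by (simp add: prime_dvd_mult_iff l(1))
qed

theorem lemma2p2:
  fixes p q r d :: int
  assumes "prime p" and "prime q" and "p \<noteq> q" and "odd p" and "odd q"
    and "r > 0"
    and "squarefree (2 * r * (p * q))"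
    and "d dvd r * (p * q)"
  shows "(has_Qv_point 2 d (- (2 * r * (p * q) div d)) \<longleftrightarrow>
            [d - 2 * r * (p * q) div d = 1] (mod 8) \<or> [d = 1] (mod 8))
       \<and> (\<forall>t. prime t \<and> t dvd (r * (p * q)) div d \<longrightarrow>
            (has_Qv_point t d (- (2 * r * (p * q) div d)) \<longleftrightarrow> Legendre d t = 1))
       \<and> (\<forall>l. prime l \<and> l dvd d \<longrightarrow>
            (has_Qv_point l d (- (2 * r * (p * q) div d)) \<longleftrightarrow>
               Legendre (- (2 * r * (p * q) div d)) l = 1))"
proof -
  obtain f where f: "r * (p * q) = d * f"
    using assms(8) ..
  have "d \<noteq> 0"
    using f assms(1,2,6) by auto
  then have quot: "2 * r * (p * q) div d = 2 * f" "r * (p * q) div d = f"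
    using f by (simp_all add: mult.assoc)
  have "squarefree (2 * (d * f))"
    using assms(7) f by (simp add: mult.assoc)
  then show ?thesis
    unfolding quot
    using curve_point_two_iff curve_point_prime_dvd_quotient_iff curve_point_prime_dvd_d_iff
    by blast
qed

end
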